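(* Let $n,k,t$ be positive integers with $k<n$ and $t\ge 4$, let $q$ be a prime power and $\mathcal{D}$ the Desarguesian $(t-1)$-spread of $\mathrm{PG}(nt-1,q)$. Let $\nu$ be a $\mathcal{D}_{n-k-1}$-subspace, $\Pi$ an $(nt-kt+1)$-dimensional subspace containing $\nu$ such that the points of $\mathcal{B}(\Pi)$ span an $(n-k+1)$-dimensional subspace of $\mathrm{PG}(n-1,q^t)$, $\Omega$ an $(nt-kt-2)$-dimensional subspace of $\Pi$ meeting $\nu$ in an $(nt-kt-4)$-dimensional subspace, $\Gamma$ a plane of $\Pi$ skew from $\Omega$, $\bar{B}$ a minimal blocking set of $\Gamma$ disjoint from $\nu$, and $K$ the cone with vertex $\Omega$ and base $\bar{B}$. Then the blocking set $\mathcal{B}(K)$ (with respect to $(k-1)$-dimensional subspaces) of $\mathrm{PG}(n-1,q^t)$ spans a subspace of dimension $n-k+1$.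
   Context: Field reduction: each point of $\mathrm{PG}(n-1,q^t)$ corresponds to a $(t-1)$-dimensional subspace of $\mathrm{PG}(nt-1,q)$; these form the Desarguesian $(t-1)$-spread $\mathcal{D}$. A $\mathcal{D}_{r-1}$-subspace is an $(rt-1)$-dimensional subspace spanned by elements of $\mathcal{D}$. For $U\subseteq\mathrm{PG}(nt-1,q)$, $\mathcal{B}(U)$ is the set of elements of $\mathcal{D}$ meeting $U$, identified with points of $\mathrm{PG}(n-1,q^t)$. The cone with vertex $\Omega$ and base $\bar{B}$ is $\bigcup_{P\in\bar B}\langle P,\Omega\rangle$. A minimal blocking set of a plane is a point set meeting every line, no proper subset of which does so. *)

theory Defs
  imports "HOL-Computational_Algebra.Primes"
begin

text \<open>Vectors of V(n, q^t) are functions 'n => 'f, where 'f is the finite field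
GF(q^t) and n = CARD('n). GF(q) is a subfield K of 'f. Projective subspaces
of PG(nt-1,q) are K-linear subspaces (projective dim = K-dim - 1); points
of PG(n-1,q^t) are 1-dimensional F-subspaces.\<close>

definition vzero :: "'n \<Rightarrow> 'f::field" where
  "vzero = (\<lambda>_. 0)"

definition vadd :: "('n \<Rightarrow> 'f::field) \<Rightarrow> ('n \<Rightarrow> 'f) \<Rightarrow> ('n \<Rightarrow> 'f)" where
  "vadd u w = (\<lambda>i. u i + w i)"

definition smul :: "'f::field \<Rightarrow> ('n \<Rightarrow> 'f) \<Rightarrow> ('n \<Rightarrow> 'f)" where
  "smul c u = (\<lambda>i. c * u i)"

definition is_subfield :: "'f::field set \<Rightarrow> bool" where
  "is_subfield K \<longleftrightarrow> 0 \<in> K \<and> 1 \<in> K \<and> (\<forall>a\<in>K. \<forall>b\<in>K. a + b \<in> K \<and> a * b \<in> K)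
     \<and> (\<forall>a\<in>K. - a \<in> K \<and> inverse a \<in> K)"

text \<open>Linear subspace over the scalar set L (L = K for GF(q), L = UNIV for GF(q^t)).\<close>
definition lin_subspace :: "'f::field set \<Rightarrow> ('n \<Rightarrow> 'f) set \<Rightarrow> bool" where
  "lin_subspace L U \<longleftrightarrow> vzero \<in> U \<and> (\<forall>u\<in>U. \<forall>w\<in>U. vadd u w \<in> U)
     \<and> (\<forall>c\<in>L. \<forall>u\<in>U. smul c u \<in> U)"

definition lin_span :: "'f::field set \<Rightarrow> ('n \<Rightarrow> 'f) set \<Rightarrow> ('n \<Rightarrow> 'f) set" where
  "lin_span L S = \<Inter>{U. lin_subspace L U \<and> S \<subseteq> U}"

definition lin_dim :: "'f::field set \<Rightarrow> ('n \<Rightarrow> 'f) set \<Rightarrow> nat" where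
  "lin_dim L U = (LEAST m. \<exists>S. finite S \<and> card S = m \<and> lin_span L S = U)"

text \<open>Subspace of PG(nt-1,q) of vector dimension d (projective dimension d-1).\<close>
definition psub :: "'f::field set \<Rightarrow> nat \<Rightarrow> ('n \<Rightarrow> 'f) set \<Rightarrow> bool" where
  "psub K d U \<longleftrightarrow> lin_subspace K U \<and> lin_dim K U = d"

text \<open>Desarguesian spread: the 1-dimensional GF(q^t)-subspaces.\<close>
definition desarg_spread :: "('n \<Rightarrow> 'f::field) set set" where
  "desarg_spread = {lin_span UNIV {v} | v. v \<noteq> vzero}"

text \<open>D_{r-1}-subspace: (rt-1)-dimensional subspace spanned by spread elements.\<close>
definition D_subspace :: "'f::field set \<Rightarrow> nat \<Rightarrow> nat \<Rightarrow> ('n \<Rightarrow> 'f) set \<Rightarrow> bool" where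
  "D_subspace K t r U \<longleftrightarrow> psub K (r * t) U
     \<and> U = lin_span K (\<Union>{d \<in> desarg_spread. d \<subseteq> U})"

definition B_set :: "('n \<Rightarrow> 'f::field) set \<Rightarrow> ('n \<Rightarrow> 'f) set set" where
  "B_set U = {d \<in> desarg_spread. \<exists>v \<in> d \<inter> U. v \<noteq> vzero}"

text \<open>Projective dimension (+1) of the span in PG(n-1,q^t) of a set of points.\<close>
definition span_dim_qt :: "('n \<Rightarrow> 'f::field) set set \<Rightarrow> nat" where
  "span_dim_qt P = lin_dim UNIV (lin_span UNIV (\<Union>P))"

definition blocks_lines :: "'f::field set \<Rightarrow> ('n \<Rightarrow> 'f) set \<Rightarrow> ('n \<Rightarrow> 'f) set set \<Rightarrow> bool" where
  "blocks_lines K Gamma B \<longleftrightarrow> (\<forall>P\<in>B. psub K 1 P \<and> P \<subseteq> Gamma)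
     \<and> (\<forall>L. psub K 2 L \<and> L \<subseteq> Gamma \<longrightarrow> (\<exists>P\<in>B. P \<subseteq> L))"

definition minimal_blocking_set :: "'f::field set \<Rightarrow> ('n \<Rightarrow> 'f) set \<Rightarrow> ('n \<Rightarrow> 'f) set set \<Rightarrow> bool" where
  "minimal_blocking_set K Gamma B \<longleftrightarrow> blocks_lines K Gamma B
     \<and> (\<forall>B'. B' \<subset> B \<longrightarrow> \<not> blocks_lines K Gamma B')"

definition cone :: "'f::field set \<Rightarrow> ('n \<Rightarrow> 'f) set \<Rightarrow> ('n \<Rightarrow> 'f) set set \<Rightarrow> ('n \<Rightarrow> 'f) set" where
  "cone K Omega B = (\<Union>P\<in>B. lin_span K (P \<union> Omega))"

end

theory Submission
  imports Defs "HOL-Library.FuncSet"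
begin

text \<open>The cone K lies between its vertex \<Omega> and \<Pi>, so it suffices that \<Omega> spans \<Pi>
over GF(q^t). Counting points, \<Pi> = \<Omega> + \<nu>. Moreover \<nu> is a GF(q^t)-subspace in which
\<Omega> \<inter> \<nu> has GF(q)-codimension 3 < t; a vector of \<nu> outside the GF(q^t)-span of
\<Omega> \<inter> \<nu> would give q^t |\<Omega> \<inter> \<nu>| \<le> |\<nu>|, so that span is all of \<nu>. Hence
K and \<Pi> have the same GF(q^t)-span, and so do B(K) and B(\<Pi>).\<close>

lemma vector_ops_apply:
  "vzero i = 0" "vadd u w i = u i + w i" "smul c u i = c * u i"
  by (simp_all add: vzero_def vadd_def smul_def)

lemma is_subfield_UNIV: "is_subfield UNIV"
  by (simp add: is_subfield_def)

lemma is_subfield_zero: "is_subfield L \<Longrightarrow> 0 \<in> L"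
  and is_subfield_one: "is_subfield L \<Longrightarrow> 1 \<in> L"
  and is_subfield_add: "is_subfield L \<Longrightarrow> a \<in> L \<Longrightarrow> b \<in> L \<Longrightarrow> a + b \<in> L"
  and is_subfield_mult: "is_subfield L \<Longrightarrow> a \<in> L \<Longrightarrow> b \<in> L \<Longrightarrow> a * b \<in> L"
  and is_subfield_uminus: "is_subfield L \<Longrightarrow> a \<in> L \<Longrightarrow> - a \<in> L"
  and is_subfield_inverse: "is_subfield L \<Longrightarrow> a \<in> L \<Longrightarrow> inverse a \<in> L"
  unfolding is_subfield_def by auto

lemma is_subfield_diff: "is_subfield L \<Longrightarrow> a \<in> L \<Longrightarrow> b \<in> L \<Longrightarrow> a - b \<in> L"
  by (metis diff_conv_add_uminus is_subfield_add is_subfield_uminus)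

lemma card_subfield_ge_2:
  fixes L :: "'f::{field,finite} set"
  assumes "is_subfield L"
  shows "2 \<le> card L"
proof -
  have "{0, 1} \<subseteq> L" using assms is_subfield_zero is_subfield_one by blast
  then show ?thesis using card_mono[of L "{0, 1}"] by simp
qed

lemma lin_subspace_vzero: "lin_subspace L U \<Longrightarrow> vzero \<in> U"
  and lin_subspace_vadd: "lin_subspace L U \<Longrightarrow> u \<in> U \<Longrightarrow> w \<in> U \<Longrightarrow> vadd u w \<in> U"
  and lin_subspace_smul: "lin_subspace L U \<Longrightarrow> c \<in> L \<Longrightarrow> u \<in> U \<Longrightarrow> smul c u \<in> U"
  unfolding lin_subspace_def by auto

lemma lin_subspace_lin_span: "lin_subspace L (lin_span L S)"
  unfolding lin_span_def lin_subspace_def by auto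

lemma lin_span_superset: "S \<subseteq> lin_span L S"
  unfolding lin_span_def by auto

lemma lin_span_minimal: "lin_subspace L U \<Longrightarrow> S \<subseteq> U \<Longrightarrow> lin_span L S \<subseteq> U"
  unfolding lin_span_def by auto

lemma lin_span_mono: "S \<subseteq> T \<Longrightarrow> lin_span L S \<subseteq> lin_span L T"
  unfolding lin_span_def by auto

lemma lin_span_eq_self: "lin_subspace L U \<Longrightarrow> lin_span L U = U"
  by (meson lin_span_superset lin_span_minimal subset_antisym order_refl)

subsection \<open>Linear combinations, independence and cardinality\<close>

definition lin_comb :: "('n \<Rightarrow> 'f::field) set \<Rightarrow> (('n \<Rightarrow> 'f) \<Rightarrow> 'f) \<Rightarrow> ('n \<Rightarrow> 'f)" where
  "lin_comb S c = (\<lambda>i. \<Sum>s\<in>S. c s * s i)"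

definition lin_indep :: "'f::field set \<Rightarrow> ('n \<Rightarrow> 'f) set \<Rightarrow> bool" where
  "lin_indep L S \<longleftrightarrow> (\<forall>c\<in>S \<rightarrow>\<^sub>E L. lin_comb S c = vzero \<longrightarrow> (\<forall>s\<in>S. c s = 0))"

lemma lin_comb_cong: "(\<And>s. s \<in> S \<Longrightarrow> c s = d s) \<Longrightarrow> lin_comb S c = lin_comb S d"
  unfolding lin_comb_def by (auto intro!: sum.cong)

lemma lin_comb_restrict: "lin_comb S (restrict c S) = lin_comb S c"
  by (rule lin_comb_cong) simp

lemma lin_comb_insert:
  "finite T \<Longrightarrow> x \<notin> T \<Longrightarrow> lin_comb (insert x T) c = vadd (smul (c x) x) (lin_comb T c)"
  unfolding lin_comb_def vadd_def smul_def by simp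

lemma lin_comb_in_lin_subspace:
  assumes U: "lin_subspace L U"
  shows "finite T \<Longrightarrow> T \<subseteq> U \<Longrightarrow> (\<forall>s\<in>T. c s \<in> L) \<Longrightarrow> lin_comb T c \<in> U"
proof (induction T rule: finite_induct)
  case empty
  then show ?case using lin_subspace_vzero[OF U] by (simp add: lin_comb_def vzero_def)
next
  case (insert x F)
  then show ?case by (simp add: lin_comb_insert lin_subspace_vadd[OF U] lin_subspace_smul[OF U])
qed

lemma lin_span_eq_lin_comb_image:
  assumes L: "is_subfield L" and fin: "finite S"
  shows "lin_span L S = lin_comb S ` (S \<rightarrow>\<^sub>E L)"
proof
  let ?C = "lin_comb S ` (S \<rightarrow>\<^sub>E L)"
  have closed: "lin_comb S d \<in> ?C" if "\<And>s. s \<in> S \<Longrightarrow> d s \<in> L" for d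
    using that by (intro image_eqI[where x = "restrict d S"]) (auto simp: lin_comb_restrict)
  have "lin_subspace L ?C"
    unfolding lin_subspace_def
  proof (intro conjI ballI)
    have "vzero = lin_comb S (\<lambda>_. 0)" by (simp add: lin_comb_def vzero_def)
    also have "\<dots> \<in> ?C" using is_subfield_zero[OF L] by (intro closed)
    finally show "vzero \<in> ?C" .
  next
    fix u w assume "u \<in> ?C" "w \<in> ?C"
    then obtain c d where c: "c \<in> S \<rightarrow>\<^sub>E L" "u = lin_comb S c" and d: "d \<in> S \<rightarrow>\<^sub>E L" "w = lin_comb S d"
      by auto
    have "vadd u w = lin_comb S (\<lambda>s. c s + d s)"
      using c d by (simp add: lin_comb_def vector_ops_apply sum.distrib distrib_right fun_eq_iff)
    also have "\<dots> \<in> ?C" using c d is_subfield_add[OF L] by (intro closed) auto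
    finally show "vadd u w \<in> ?C" .
  next
    fix a u assume a: "a \<in> L" and "u \<in> ?C"
    then obtain c where c: "c \<in> S \<rightarrow>\<^sub>E L" "u = lin_comb S c" by auto
    have "smul a u = lin_comb S (\<lambda>s. a * c s)"
      using c by (simp add: lin_comb_def vector_ops_apply sum_distrib_left mult.assoc fun_eq_iff)
    also have "\<dots> \<in> ?C" using a c is_subfield_mult[OF L] by (intro closed) auto
    finally show "smul a u \<in> ?C" .
  qed
  moreover have "S \<subseteq> ?C"
  proof
    fix s0 assume s0: "s0 \<in> S"
    have "(\<Sum>s\<in>S. (if s = s0 then 1 else 0) * s i) = s0 i" for i
      using s0 fin by (simp add: if_distrib[where f = "\<lambda>a. a * _"] sum.delta' cong: if_cong)
    then have "s0 = lin_comb S (\<lambda>s. if s = s0 then 1 else 0)"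
      by (simp add: lin_comb_def fun_eq_iff)
    also have "\<dots> \<in> ?C" using is_subfield_zero[OF L] is_subfield_one[OF L] by (intro closed) auto
    finally show "s0 \<in> ?C" .
  qed
  ultimately show "lin_span L S \<subseteq> ?C" by (rule lin_span_minimal)
  show "?C \<subseteq> lin_span L S"
    using fin lin_span_superset
    by (auto intro!: lin_comb_in_lin_subspace[OF lin_subspace_lin_span] simp: PiE_iff)
qed

lemma inj_on_lin_comb:
  assumes L: "is_subfield L" and "lin_indep L S"
  shows "inj_on (lin_comb S) (S \<rightarrow>\<^sub>E L)"
proof (rule inj_onI)
  fix c d assume c: "c \<in> S \<rightarrow>\<^sub>E L" and d: "d \<in> S \<rightarrow>\<^sub>E L" and eq: "lin_comb S c = lin_comb S d"
  have "restrict (\<lambda>s. c s - d s) S \<in> S \<rightarrow>\<^sub>E L" using c d is_subfield_diff[OF L] by auto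
  moreover have "lin_comb S (restrict (\<lambda>s. c s - d s) S) = vzero"
    using eq
    by (simp add: lin_comb_restrict lin_comb_def vector_ops_apply fun_eq_iff left_diff_distrib sum_subtractf)
  ultimately have "\<forall>s\<in>S. c s - d s = 0" using \<open>lin_indep L S\<close> unfolding lin_indep_def by fastforce
  then show "c = d" using c d by (intro PiE_ext) auto
qed

lemma card_lin_span_lin_indep:
  fixes S :: "('n::finite \<Rightarrow> 'f::{field,finite}) set"
  assumes L: "is_subfield L" and "lin_indep L S"
  shows "card (lin_span L S) = card L ^ card S"
proof -
  have "card (lin_span L S) = card (S \<rightarrow>\<^sub>E L)"
    unfolding lin_span_eq_lin_comb_image[OF L finite]
    by (rule card_image[OF inj_on_lin_comb[OF L assms(2)]])
  then show ?thesis by (simp add: card_PiE)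
qed

lemma lin_dim_spanning_set:
  fixes U :: "('n::finite \<Rightarrow> 'f::{field,finite}) set"
  assumes "lin_subspace L U"
  obtains S where "card S = lin_dim L U" and "lin_span L S = U"
proof -
  have "\<exists>S. finite S \<and> card S = card U \<and> lin_span L S = U"
    using lin_span_eq_self[OF assms] by auto
  then have "\<exists>S. finite S \<and> card S = lin_dim L U \<and> lin_span L S = U"
    unfolding lin_dim_def by (rule LeastI_ex[OF exI])
  then show ?thesis using that by blast
qed

text \<open>A nontrivial relation expresses one vector through the others, leaving a smaller
spanning set.\<close>

lemma minimal_spanning_set_lin_indep:
  fixes S :: "('n::finite \<Rightarrow> 'f::{field,finite}) set"
  assumes L: "is_subfield L" and span: "lin_span L S = U" and card: "card S = lin_dim L U"
  shows "lin_indep L S"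
  unfolding lin_indep_def
proof (intro ballI impI, rule ccontr)
  fix c s0 assume c: "c \<in> S \<rightarrow>\<^sub>E L" and rel: "lin_comb S c = vzero"
    and s0: "s0 \<in> S" and cs0: "c s0 \<noteq> 0"
  let ?S' = "S - {s0}"
  have "lin_comb S c = vadd (smul (c s0) s0) (lin_comb ?S' c)"
    using s0 lin_comb_insert[of ?S' s0 c] by (simp add: insert_absorb)
  then have "s0 = smul (- inverse (c s0)) (lin_comb ?S' c)"
    using rel cs0 by (auto simp: fun_eq_iff vector_ops_apply field_simps eq_neg_iff_add_eq_0)
  moreover have "lin_comb ?S' c \<in> lin_span L ?S'"
    using c lin_span_superset[of ?S' L]
    by (intro lin_comb_in_lin_subspace[OF lin_subspace_lin_span]) auto
  moreover have "- inverse (c s0) \<in> L"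
    using c s0 is_subfield_uminus[OF L] is_subfield_inverse[OF L] by auto
  ultimately have "s0 \<in> lin_span L ?S'"
    by (metis lin_subspace_smul lin_subspace_lin_span)
  then have "S \<subseteq> lin_span L ?S'" using lin_span_superset[of ?S' L] by blast
  then have "U \<subseteq> lin_span L ?S'"
    unfolding span[symmetric] by (rule lin_span_minimal[OF lin_subspace_lin_span])
  moreover have "lin_span L ?S' \<subseteq> U"
    unfolding span[symmetric] using lin_span_superset[of S L]
    by (intro lin_span_minimal[OF lin_subspace_lin_span]) blast
  ultimately have "lin_span L ?S' = U" by blast
  then have "lin_dim L U \<le> card ?S'"
    unfolding lin_dim_def by (intro Least_le) auto
  moreover have "card ?S' < card S" by (rule card_Diff1_less[OF finite s0])
  ultimately show False using card by simp
qed

lemma card_lin_subspace: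
  fixes U :: "('n::finite \<Rightarrow> 'f::{field,finite}) set"
  assumes L: "is_subfield L" and "lin_subspace L U"
  shows "card U = card L ^ lin_dim L U"
proof -
  obtain S where S: "card S = lin_dim L U" "lin_span L S = U"
    using lin_dim_spanning_set[OF assms(2)] .
  then show ?thesis
    using card_lin_span_lin_indep[OF L minimal_spanning_set_lin_indep[OF L S(2) S(1)]] by simp
qed

lemma card_psub:
  fixes U :: "('n::finite \<Rightarrow> 'f::{field,finite}) set"
  assumes "is_subfield K" and "psub K d U"
  shows "card U = card K ^ d"
  using assms card_lin_subspace unfolding psub_def by blast

lemma lin_dim_lin_span_lin_indep:
  fixes S :: "('n::finite \<Rightarrow> 'f::{field,finite}) set"
  assumes L: "is_subfield L" and "lin_indep L S"
  shows "lin_dim L (lin_span L S) = card S"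
proof -
  have "card L ^ lin_dim L (lin_span L S) = card L ^ card S"
    using card_lin_subspace[OF L lin_subspace_lin_span[of L S]] card_lin_span_lin_indep[OF assms]
    by simp
  then show ?thesis using card_subfield_ge_2[OF L] by (simp add: power_inject_exp)
qed

lemma lin_indep_subset:
  fixes S :: "('n::finite \<Rightarrow> 'f::{field,finite}) set"
  assumes L: "is_subfield L" and indep: "lin_indep L S" and "T \<subseteq> S"
  shows "lin_indep L T"
  unfolding lin_indep_def
proof (intro ballI impI)
  fix c s assume c: "c \<in> T \<rightarrow>\<^sub>E L" and rel: "lin_comb T c = vzero" and s: "s \<in> T"
  define c' where "c' = restrict (\<lambda>s. if s \<in> T then c s else 0) S"
  have "c' \<in> S \<rightarrow>\<^sub>E L" using c is_subfield_zero[OF L] unfolding c'_def by auto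
  moreover have "lin_comb S c' = lin_comb T c"
  proof -
    have "lin_comb S c' = (\<lambda>i. \<Sum>s\<in>S. if s \<in> T then c s * s i else 0)"
      unfolding c'_def lin_comb_restrict lin_comb_def by (auto intro!: sum.cong)
    also have "\<dots> = lin_comb T c"
      using \<open>T \<subseteq> S\<close> by (simp add: lin_comb_def sum.inter_restrict[symmetric] Int_absorb1)
    finally show ?thesis .
  qed
  ultimately have "c' s = 0" using indep rel s \<open>T \<subseteq> S\<close> unfolding lin_indep_def by auto
  then show "c s = 0" using s \<open>T \<subseteq> S\<close> unfolding c'_def by auto
qed

subsection \<open>Lines, cones and the Desarguesian spread\<close>

lemma blocks_lines_plane_nonempty:
  fixes Gamma :: "('n::finite \<Rightarrow> 'f::{field,finite}) set"
  assumes K: "is_subfield K" and "psub K 3 Gamma" and "blocks_lines K Gamma B"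
  shows "B \<noteq> {}"
proof -
  have Gamma: "lin_subspace K Gamma" using assms(2) unfolding psub_def by blast
  obtain S where S: "card S = 3" "lin_span K S = Gamma"
    using lin_dim_spanning_set[OF Gamma] assms(2) unfolding psub_def by metis
  have indep: "lin_indep K S" using minimal_spanning_set_lin_indep[OF K S(2)] S(1) assms(2)
    unfolding psub_def by simp
  obtain T where T: "T \<subseteq> S" "card T = 2"
    using obtain_subset_with_card_n[of 2 S] S(1) by auto
  have "psub K 2 (lin_span K T)"
    using lin_dim_lin_span_lin_indep[OF K lin_indep_subset[OF K indep T(1)]] T(2)
    by (simp add: psub_def lin_subspace_lin_span)
  moreover have "lin_span K T \<subseteq> Gamma"
    using T(1) S(2) lin_span_superset[of S K] by (intro lin_span_minimal[OF Gamma]) blast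
  ultimately show ?thesis using assms(3) unfolding blocks_lines_def by blast
qed

lemma vertex_subset_cone:
  assumes "P \<in> B"
  shows "Omega \<subseteq> cone K Omega B"
  using assms lin_span_superset[of "P \<union> Omega" K] unfolding cone_def by blast

lemma cone_subset:
  assumes "lin_subspace K U" and "Omega \<subseteq> U" and "\<forall>P\<in>B. P \<subseteq> U"
  shows "cone K Omega B \<subseteq> U"
  unfolding cone_def
proof (rule UN_least)
  fix P assume "P \<in> B"
  then have "P \<union> Omega \<subseteq> U" using assms(2,3) by blast
  then show "lin_span K (P \<union> Omega) \<subseteq> U" by (rule lin_span_minimal[OF assms(1)])
qed

text \<open>The GF(q)-subspace of vectors all of whose GF(q^t)-multiples lie in the span
contains S, hence the whole span.\<close>

lemma lin_span_scalar_closed: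
  fixes S :: "('n \<Rightarrow> 'f::field) set"
  assumes "is_subfield K" and S: "\<And>c u. u \<in> S \<Longrightarrow> smul c u \<in> S"
  shows "lin_subspace UNIV (lin_span K S)"
proof -
  let ?X = "lin_span K S"
  have X: "lin_subspace K ?X" by (rule lin_subspace_lin_span)
  let ?Y = "{v. \<forall>c. smul c v \<in> ?X}"
  have "lin_subspace K ?Y"
    unfolding lin_subspace_def
  proof (intro conjI ballI)
    show "vzero \<in> ?Y" using lin_subspace_vzero[OF X] by (simp add: vzero_def smul_def)
  next
    fix u w assume "u \<in> ?Y" "w \<in> ?Y"
    then have "\<And>c. vadd (smul c u) (smul c w) \<in> ?X" using lin_subspace_vadd[OF X] by blast
    then show "vadd u w \<in> ?Y" by (simp add: vadd_def smul_def distrib_left)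
  next
    fix a u assume "a \<in> K" "u \<in> ?Y"
    then have "\<And>c. smul a (smul c u) \<in> ?X" using lin_subspace_smul[OF X] by blast
    then show "smul a u \<in> ?Y" by (simp add: smul_def mult.left_commute)
  qed
  moreover have "S \<subseteq> ?Y" using S lin_span_superset[of S K] by blast
  ultimately have "?X \<subseteq> ?Y" by (rule lin_span_minimal)
  then show ?thesis using X unfolding lin_subspace_def by blast
qed

lemma desarg_spread_smul:
  assumes "d \<in> desarg_spread" and "u \<in> d"
  shows "smul c u \<in> d"
  using assms lin_subspace_smul[OF lin_subspace_lin_span]
  unfolding desarg_spread_def by blast

lemma D_subspace_scalar_closed:
  assumes "is_subfield K" and "D_subspace K t r U"
  shows "lin_subspace UNIV U"
proof -
  have "lin_subspace UNIV (lin_span K (\<Union>{d \<in> desarg_spread. d \<subseteq> U}))"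
    using desarg_spread_smul by (intro lin_span_scalar_closed[OF assms(1)]) blast
  moreover have "U = lin_span K (\<Union>{d \<in> desarg_spread. d \<subseteq> U})"
    using assms(2) unfolding D_subspace_def by blast
  ultimately show ?thesis by simp
qed

lemma lin_span_Union_B_set:
  fixes U :: "('n::finite \<Rightarrow> 'f::{field,finite}) set"
  shows "lin_span UNIV (\<Union>(B_set U)) = lin_span UNIV U"
proof
  show "lin_span UNIV (\<Union>(B_set U)) \<subseteq> lin_span UNIV U"
  proof (rule lin_span_minimal[OF lin_subspace_lin_span], rule Union_least)
    fix d assume "d \<in> B_set U"
    then obtain v w where d: "d = lin_span UNIV {v}" and w: "w \<in> d" "w \<in> U" "w \<noteq> vzero"
      unfolding B_set_def desarg_spread_def by blast
    obtain a where a: "w = smul a v"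
      using w(1) d lin_span_eq_lin_comb_image[OF is_subfield_UNIV, of "{v}"]
      by (auto simp: lin_comb_def smul_def)
    then have "a \<noteq> 0" using w(3) by (auto simp: fun_eq_iff vector_ops_apply)
    then have "v = smul (inverse a) w" using a by (auto simp: fun_eq_iff vector_ops_apply)
    then have "v \<in> lin_span UNIV U"
      using w(2) lin_span_superset lin_subspace_smul[OF lin_subspace_lin_span] by (metis UNIV_I subsetD)
    then show "d \<subseteq> lin_span UNIV U"
      unfolding d by (intro lin_span_minimal[OF lin_subspace_lin_span]) auto
  qed
  have "U \<subseteq> lin_span UNIV (\<Union>(B_set U))"
  proof
    fix u assume u: "u \<in> U"
    show "u \<in> lin_span UNIV (\<Union>(B_set U))"
    proof (cases "u = vzero")
      case True
      then show ?thesis by (simp add: lin_subspace_vzero[OF lin_subspace_lin_span])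
    next
      case False
      have "u \<in> lin_span UNIV {u}" using lin_span_superset by blast
      moreover from this have "lin_span UNIV {u} \<in> B_set U"
        using u False unfolding B_set_def desarg_spread_def by blast
      ultimately show ?thesis using lin_span_superset[of "\<Union>(B_set U)" UNIV] by blast
    qed
  qed
  then show "lin_span UNIV U \<subseteq> lin_span UNIV (\<Union>(B_set U))"
    by (rule lin_span_minimal[OF lin_subspace_lin_span])
qed

lemma span_dim_qt_B_set:
  fixes U :: "('n::finite \<Rightarrow> 'f::{field,finite}) set"
  shows "span_dim_qt (B_set U) = lin_dim UNIV (lin_span UNIV U)"
  unfolding span_dim_qt_def lin_span_Union_B_set ..

subsection \<open>Counting arguments\<close>

definition subspace_sum :: "('n \<Rightarrow> 'f::field) set \<Rightarrow> ('n \<Rightarrow> 'f) set \<Rightarrow> ('n \<Rightarrow> 'f) set" where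
  "subspace_sum A B = {vadd a b | a b. a \<in> A \<and> b \<in> B}"

text \<open>Each fibre of the addition map A \<times> B \<rightarrow> A + B is a translate of A \<inter> B.\<close>

lemma card_mult_le_subspace_sum:
  fixes A B :: "('n::finite \<Rightarrow> 'f::{field,finite}) set"
  assumes L: "is_subfield L" and A: "lin_subspace L A" and B: "lin_subspace L B"
  shows "card A * card B \<le> card (subspace_sum A B) * card (A \<inter> B)"
proof -
  have m1: "- 1 \<in> L" using is_subfield_uminus[OF L is_subfield_one[OF L]] .
  define fibre where "fibre s = {x \<in> A \<times> B. vadd (fst x) (snd x) = s}" for s
  have fibre_bound: "card (fibre s) \<le> card (A \<inter> B)" if s: "s \<in> subspace_sum A B" for s
  proof -
    obtain a0 b0 where ab0: "a0 \<in> A" "b0 \<in> B" "s = vadd a0 b0"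
      using s unfolding subspace_sum_def by auto
    let ?f = "\<lambda>x. vadd (fst x) (smul (-1) a0)"
    have "inj_on ?f (fibre s)"
      by (rule inj_onI) (auto simp: fibre_def fun_eq_iff prod_eq_iff vector_ops_apply, metis add_left_cancel)
    moreover have "?f ` fibre s \<subseteq> A \<inter> B"
    proof clarify
      fix a b assume "(a, b) \<in> fibre s"
      then have ab: "a \<in> A" "b \<in> B" "vadd a b = vadd a0 b0" using ab0 by (auto simp: fibre_def)
      have "vadd a (smul (-1) a0) = vadd b0 (smul (-1) b)"
        using ab(3) by (auto simp: fun_eq_iff vector_ops_apply algebra_simps dest!: fun_cong)
      then show "?f (a, b) \<in> A \<inter> B"
        using ab ab0 m1 lin_subspace_vadd lin_subspace_smul A B by fastforce
    qed
    ultimately show ?thesis by (rule card_inj_on_le) simp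
  qed
  have "A \<times> B \<subseteq> (\<Union>s\<in>subspace_sum A B. fibre s)"
  proof clarify
    fix a b assume "a \<in> A" "b \<in> B"
    then have "vadd a b \<in> subspace_sum A B" "(a, b) \<in> fibre (vadd a b)"
      unfolding fibre_def subspace_sum_def by auto
    then show "(a, b) \<in> (\<Union>s\<in>subspace_sum A B. fibre s)" by blast
  qed
  then have "card (A \<times> B) \<le> card (\<Union>s\<in>subspace_sum A B. fibre s)"
    by (rule card_mono[rotated]) simp
  also have "\<dots> \<le> (\<Sum>s\<in>subspace_sum A B. card (fibre s))"
    by (rule card_UN_le) simp
  finally have "card A * card B \<le> (\<Sum>s\<in>subspace_sum A B. card (fibre s))"
    by (simp add: card_cartesian_product)
  also have "\<dots> \<le> card (subspace_sum A B) * card (A \<inter> B)"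
    using sum_bounded_above[of "subspace_sum A B" "\<lambda>s. card (fibre s)"] fibre_bound by simp
  finally show ?thesis .
qed

lemma subspace_sum_eq_of_card:
  fixes U :: "('n::finite \<Rightarrow> 'f::{field,finite}) set"
  assumes L: "is_subfield L" and U: "lin_subspace L U"
    and A: "lin_subspace L A" "A \<subseteq> U" and B: "lin_subspace L B" "B \<subseteq> U"
    and card: "card U * card (A \<inter> B) \<le> card A * card B"
  shows "subspace_sum A B = U"
proof (rule card_seteq)
  show "subspace_sum A B \<subseteq> U"
    using A B lin_subspace_vadd[OF U] unfolding subspace_sum_def by blast
  have "0 < card (A \<inter> B)"
    using lin_subspace_vzero[OF A(1)] lin_subspace_vzero[OF B(1)] by (auto simp: card_gt_0_iff)
  then show "card U \<le> card (subspace_sum A B)"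
    using card card_mult_le_subspace_sum[OF L A(1) B(1)] by (meson le_trans mult_le_cancel2)
qed simp

lemma inj_on_adjoin_vector:
  assumes L: "is_subfield L" and V: "lin_subspace L V" and "v \<notin> V"
  shows "inj_on (\<lambda>(a, w). vadd w (smul a v)) (L \<times> V)"
proof (rule inj_onI, clarify)
  fix a w b w' assume ab: "a \<in> L" "b \<in> L" and ww: "w \<in> V" "w' \<in> V"
    and eq: "vadd w (smul a v) = vadd w' (smul b v)"
  show "a = b \<and> w = w'"
  proof (cases "a = b")
    case True
    then show ?thesis using eq by (auto simp: fun_eq_iff vector_ops_apply)
  next
    case False
    have "v = smul (inverse (a - b)) (vadd w' (smul (-1) w))"
      using eq False by (auto simp: fun_eq_iff vector_ops_apply field_simps dest!: fun_cong)
    moreover have "inverse (a - b) \<in> L" "- 1 \<in> L"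
      using ab L by (simp_all add: is_subfield_inverse is_subfield_diff is_subfield_uminus is_subfield_one)
    ultimately have "v \<in> V" using ww by (metis V lin_subspace_smul lin_subspace_vadd)
    then show ?thesis using \<open>v \<notin> V\<close> by blast
  qed
qed

lemma subset_lin_span_of_card:
  fixes N :: "('n::finite \<Rightarrow> 'f::{field,finite}) set"
  assumes L: "is_subfield L" and N: "lin_subspace L N" and "W \<subseteq> N"
    and card: "card N < card L * card W"
  shows "N \<subseteq> lin_span L W"
proof (rule ccontr)
  let ?V = "lin_span L W"
  assume "\<not> N \<subseteq> ?V"
  then obtain v where v: "v \<in> N" "v \<notin> ?V" by blast
  have "?V \<subseteq> N" using lin_span_minimal[OF N \<open>W \<subseteq> N\<close>] .
  then have "(\<lambda>(a, w). vadd w (smul a v)) ` (L \<times> ?V) \<subseteq> N"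
    using v(1) lin_subspace_vadd[OF N] lin_subspace_smul[OF N] by auto
  then have "card L * card ?V \<le> card N"
    using card_inj_on_le[OF inj_on_adjoin_vector[OF L lin_subspace_lin_span v(2)]]
    by (simp add: card_cartesian_product)
  moreover have "card W \<le> card ?V" by (simp add: card_mono lin_span_superset)
  ultimately show False using card by (meson le_trans mult_le_mono2 not_le)
qed

lemma lin_span_eq_of_subspace_sum:
  assumes U: "U = subspace_sum A B" and "A \<subseteq> C" and "C \<subseteq> U" and B: "B \<subseteq> lin_span UNIV C"
  shows "lin_span UNIV C = lin_span UNIV U"
proof
  show "lin_span UNIV C \<subseteq> lin_span UNIV U" using \<open>C \<subseteq> U\<close> by (rule lin_span_mono)
  have "U \<subseteq> lin_span UNIV C"
  proof
    fix u assume "u \<in> U"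
    then obtain a b where "a \<in> A" "b \<in> B" "u = vadd a b" using U unfolding subspace_sum_def by blast
    moreover have "A \<subseteq> lin_span UNIV C" using \<open>A \<subseteq> C\<close> lin_span_superset[of C UNIV] by (rule order_trans)
    ultimately show "u \<in> lin_span UNIV C" using B lin_subspace_vadd[OF lin_subspace_lin_span] by blast
  qed
  then show "lin_span UNIV U \<subseteq> lin_span UNIV C" by (rule lin_span_minimal[OF lin_subspace_lin_span])
qed

theorem proposition4p11:
  fixes K :: "'f::{field,finite} set"
    and n k t q :: nat
    and nu Pi Omega Gamma :: "('n::finite \<Rightarrow> 'f) set"
    and Bbar :: "('n \<Rightarrow> 'f) set set"
  assumes "n = card (UNIV :: 'n set)"
    and "0 < k" and "k < n" and "4 \<le> t"
    and "\<exists>p r. prime p \<and> 0 < r \<and> q = p ^ r"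
    and "is_subfield K" and "card K = q" and "card (UNIV :: 'f set) = q ^ t"
    and "D_subspace K t (n - k) nu"
    and "psub K (n*t - k*t + 2) Pi" and "nu \<subseteq> Pi"
    and "span_dim_qt (B_set Pi) = n - k + 2"
    and "psub K (n*t - k*t - 1) Omega" and "Omega \<subseteq> Pi"
    and "psub K (n*t - k*t - 3) (Omega \<inter> nu)"
    and "psub K 3 Gamma" and "Gamma \<subseteq> Pi" and "Gamma \<inter> Omega = {vzero}"
    and "minimal_blocking_set K Gamma Bbar"
    and "\<forall>P\<in>Bbar. P \<inter> nu = {vzero}"
  shows "span_dim_qt (B_set (cone K Omega Bbar)) = n - k + 2"
proof -
  note K = \<open>is_subfield K\<close>
  have q: "1 < q" using card_subfield_ge_2[OF K] \<open>card K = q\<close> by simp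
  define M where "M = n*t - k*t"
  have "t \<le> M" using \<open>k < n\<close> by (auto simp: M_def diff_mult_distrib[symmetric])
  then have M: "4 \<le> M" using \<open>4 \<le> t\<close> by simp
  have nu: "psub K M nu" using \<open>D_subspace K t (n - k) nu\<close>
    unfolding D_subspace_def M_def by (simp add: diff_mult_distrib)
  have subspaces: "lin_subspace K Pi" "lin_subspace K Omega" "lin_subspace K nu"
    using assms(10,13) nu unfolding psub_def by blast+
  have card_nu: "card nu = q ^ M" using card_psub[OF K nu] assms(7) by simp
  have card_Pi: "card Pi = q ^ (M + 2)" using card_psub[OF K assms(10)] assms(7) M_def by simp
  have card_Omega: "card Omega = q ^ (M - 1)" using card_psub[OF K assms(13)] assms(7) M_def by simp
  have card_Int: "card (Omega \<inter> nu) = q ^ (M - 3)"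
    using card_psub[OF K assms(15)] assms(7) M_def by simp
  have "M + 2 + (M - 3) = M - 1 + M" using M by simp
  then have "card Pi * card (Omega \<inter> nu) \<le> card Omega * card nu"
    unfolding card_Pi card_Omega card_nu card_Int by (metis power_add order_refl)
  then have Pi_sum: "subspace_sum Omega nu = Pi"
    using assms(11,14) by (intro subspace_sum_eq_of_card[OF K subspaces(1) subspaces(2) _ subspaces(3)])
  have "q ^ M < q ^ (t + (M - 3))" using q M \<open>4 \<le> t\<close> by (intro power_strict_increasing) auto
  then have "card nu < card (UNIV :: 'f set) * card (Omega \<inter> nu)"
    unfolding card_nu card_Int assms(8) by (simp add: power_add)
  then have "nu \<subseteq> lin_span UNIV (Omega \<inter> nu)"
    by (intro subset_lin_span_of_card[OF is_subfield_UNIV D_subspace_scalar_closed[OF K assms(9)]]) auto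
  have blocking: "blocks_lines K Gamma Bbar"
    using assms(19) unfolding minimal_blocking_set_def by (rule conjunct1)
  obtain P where "P \<in> Bbar" using blocks_lines_plane_nonempty[OF K assms(16) blocking] by blast
  then have Omega_cone: "Omega \<subseteq> cone K Omega Bbar" by (rule vertex_subset_cone)
  have "\<forall>P\<in>Bbar. P \<subseteq> Pi" using blocking assms(17) unfolding blocks_lines_def by blast
  then have cone_Pi: "cone K Omega Bbar \<subseteq> Pi" by (rule cone_subset[OF subspaces(1) assms(14)])
  have "lin_span UNIV (Omega \<inter> nu) \<subseteq> lin_span UNIV (cone K Omega Bbar)"
    using Omega_cone by (intro lin_span_mono) blast
  then have "nu \<subseteq> lin_span UNIV (cone K Omega Bbar)"
    using \<open>nu \<subseteq> lin_span UNIV (Omega \<inter> nu)\<close> by blast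
  then have "lin_span UNIV (cone K Omega Bbar) = lin_span UNIV Pi"
    by (rule lin_span_eq_of_subspace_sum[OF Pi_sum[symmetric] Omega_cone cone_Pi])
  then show ?thesis using assms(12) by (simp add: span_dim_qt_B_set)
qed

end
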